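(* Let $N=2^L$ ($L\ge1$), channel numbers $r_0,\dots,r_{L-1}\ge1$, an output index $y$, and linearly independent representation functions $f_{\theta_1},\dots,f_{\theta_M}\in\mathcal F$ be given for the deep ConvNet with linear activation and product pooling. Suppose its linear weights $\{\mathbf a^{l,j,\gamma}\}$ are drawn from a distribution that is absolutely continuous with respect to Lebesgue measure. Then with probability $1$ the score function $h^D_y$ differs from the score function $h^S_y$ of every shallow ConvNet with ReLU activation and max pooling whose number of hidden channels satisfies $Z<\min\{r_0,M\}^{N/2}\cdot\frac{2}{M\cdot N}$ (for any choice of its representation functions in $\mathcal F$ and weights).
   Context: Inputs are $X=(\mathbf x_1,\dots,\mathbf x_N)\in(\mathbb R^s)^N$. Representation functions come from a family $\mathcal F=\{f_\theta:\mathbb R^s\to\mathbb R:\theta\in\Theta\}$ assumed throughout to satisfy: (continuity) $f_\theta(\mathbf x)$ continuous in $\theta$ and $\mathbf x$; (non-degeneracy) for any pairwise distinct $\mathbf x^{(1)},\dots,\mathbf x^{(M)}$ there exist $f_{\theta_1},\dots,f_{\theta_M}\in\mathcal F$ with $(f_{\theta_d}(\mathbf x^{(i)}))_{i,d}$ non-singular. Linear activation with product pooling: $\sigma(z)=z$, $P=$ product. ReLU activation with max pooling: $\sigma(z)=\max\{0,z\}$, $P=\max$. Shallow ConvNet (activation $\sigma$, pooling $P$, $Z$ hidden channels): $h^S_y(X)=\sum_{z=1}^Z a^y_z\,P_{i\in[N]}\big(\sigma(\sum_{d=1}^M a^{z,i}_d f_{\theta_d}(\mathbf x_i))\big)$,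 $f_{\theta_d}\in\mathcal F$, $\mathbf a^{z,i}\in\mathbb R^M$, $\mathbf a^y\in\mathbb R^Z$. Deep ConvNet (activation $\sigma$, pooling $P$): with $f_{\theta_d}$, weights $\mathbf a^{0,j,\gamma}\in\mathbb R^M$ ($j\in[N],\gamma\in[r_0]$), $\mathbf a^{l,j,\gamma}\in\mathbb R^{r_{l-1}}$ ($l\in[L-1]$, $j\in[N/2^l]$, $\gamma\in[r_l]$), $\mathbf a^{L,1,y}\in\mathbb R^{r_{L-1}}$: $u^0_{j,\gamma}=\sigma(\sum_d a^{0,j,\gamma}_d f_{\theta_d}(\mathbf x_j))$; for $l=0,\dots,L-1$, $v^l_{j,\gamma}=P(u^l_{2j-1,\gamma},u^l_{2j,\gamma})$ ($j\in[N/2^{l+1}]$), and for $l\ge1$, $u^l_{j,\gamma}=\sigma(\sum_\alpha a^{l,j,\gamma}_\alpha v^{l-1}_{j,\alpha})$ ($j\in[N/2^l]$); $h^D_y(X)=\sum_\alpha a^{L,1,y}_\alpha v^{L-1}_{1,\alpha}$. *)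

theory Defs
  imports "HOL-Probability.Probability"
begin

definition det_sq :: "nat \<Rightarrow> (nat \<Rightarrow> nat \<Rightarrow> real) \<Rightarrow> real" where
  "det_sq M A = (\<Sum>p | p permutes {0..<M}. of_int (sign p) * (\<Prod>i<M. A i (p i)))"

definition rep_family :: "'p::topological_space set \<Rightarrow> ('p \<Rightarrow> real^'s \<Rightarrow> real) \<Rightarrow> bool" where
  "rep_family \<Theta> f \<longleftrightarrow>
     continuous_on (\<Theta> \<times> UNIV) (\<lambda>(\<theta>, x). f \<theta> x) \<and>
     (\<forall>M (xs :: nat \<Rightarrow> real^'s). inj_on xs {0..<M} \<longrightarrow>
        (\<exists>\<theta>s. (\<forall>d<M. \<theta>s d \<in> \<Theta>) \<and> det_sq M (\<lambda>i d. f (\<theta>s d) (xs i)) \<noteq> 0))"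

definition lin_indep_funs :: "nat \<Rightarrow> (nat \<Rightarrow> 'x \<Rightarrow> real) \<Rightarrow> bool" where
  "lin_indep_funs M g \<longleftrightarrow>
     (\<forall>c. (\<forall>x. (\<Sum>d=1..M. c d * g d x) = 0) \<longrightarrow> (\<forall>d\<in>{1..M}. c d = 0))"

(* Weights w (l, j, \<gamma>, \<alpha>) = a^{l,j,\<gamma>}_\<alpha>; input X i = x_i (i = 1..N);
   representation functions f (\<theta> d), d = 1..M; channel numbers r l.
   deep_u ... l j \<gamma> = u^l_{j,\<gamma>}. *)
primrec deep_u :: "(real \<Rightarrow> real) \<Rightarrow> (real \<Rightarrow> real \<Rightarrow> real) \<Rightarrow> ('p \<Rightarrow> 'x \<Rightarrow> real) \<Rightarrow> (nat \<Rightarrow> 'p)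
    \<Rightarrow> nat \<Rightarrow> (nat \<Rightarrow> nat) \<Rightarrow> (nat \<times> nat \<times> nat \<times> nat \<Rightarrow> real) \<Rightarrow> (nat \<Rightarrow> 'x)
    \<Rightarrow> nat \<Rightarrow> nat \<Rightarrow> nat \<Rightarrow> real" where
  "deep_u \<sigma> P f \<theta> M r w X 0 j \<gamma> = \<sigma> (\<Sum>d=1..M. w (0, j, \<gamma>, d) * f (\<theta> d) (X j))"
| "deep_u \<sigma> P f \<theta> M r w X (Suc l) j \<gamma> =
     \<sigma> (\<Sum>\<alpha>=1..r l. w (Suc l, j, \<gamma>, \<alpha>) *
          P (deep_u \<sigma> P f \<theta> M r w X l (2*j - 1) \<alpha>) (deep_u \<sigma> P f \<theta> M r w X l (2*j) \<alpha>))"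

definition deep_v :: "(real \<Rightarrow> real) \<Rightarrow> (real \<Rightarrow> real \<Rightarrow> real) \<Rightarrow> ('p \<Rightarrow> 'x \<Rightarrow> real) \<Rightarrow> (nat \<Rightarrow> 'p)
    \<Rightarrow> nat \<Rightarrow> (nat \<Rightarrow> nat) \<Rightarrow> (nat \<times> nat \<times> nat \<times> nat \<Rightarrow> real) \<Rightarrow> (nat \<Rightarrow> 'x)
    \<Rightarrow> nat \<Rightarrow> nat \<Rightarrow> nat \<Rightarrow> real" where
  "deep_v \<sigma> P f \<theta> M r w X l j \<gamma> =
     P (deep_u \<sigma> P f \<theta> M r w X l (2*j - 1) \<gamma>) (deep_u \<sigma> P f \<theta> M r w X l (2*j) \<gamma>)"

definition deep_score :: "(real \<Rightarrow> real) \<Rightarrow> (real \<Rightarrow> real \<Rightarrow> real) \<Rightarrow> ('p \<Rightarrow> 'x \<Rightarrow> real) \<Rightarrow> (nat \<Rightarrow> 'p)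
    \<Rightarrow> nat \<Rightarrow> (nat \<Rightarrow> nat) \<Rightarrow> nat \<Rightarrow> (nat \<times> nat \<times> nat \<times> nat \<Rightarrow> real) \<Rightarrow> nat \<Rightarrow> (nat \<Rightarrow> 'x) \<Rightarrow> real" where
  "deep_score \<sigma> P f \<theta> M r L w y X =
     (\<Sum>\<alpha>=1..r (L - 1). w (L, 1, y, \<alpha>) * deep_v \<sigma> P f \<theta> M r w X (L - 1) 1 \<alpha>)"

definition deep_weight_idx :: "nat \<Rightarrow> (nat \<Rightarrow> nat) \<Rightarrow> nat \<Rightarrow> nat \<Rightarrow> (nat \<times> nat \<times> nat \<times> nat) set" where
  "deep_weight_idx M r L Y =
     {(l, j, \<gamma>, d). l = 0 \<and> j \<in> {1..2^L} \<and> \<gamma> \<in> {1..r 0} \<and> d \<in> {1..M}}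
   \<union> {(l, j, \<gamma>, \<alpha>). l \<in> {1..L - 1} \<and> j \<in> {1..2^L div 2^l} \<and> \<gamma> \<in> {1..r l} \<and> \<alpha> \<in> {1..r (l - 1)}}
   \<union> {(l, j, \<gamma>, \<alpha>). l = L \<and> j = 1 \<and> \<gamma> \<in> {1..Y} \<and> \<alpha> \<in> {1..r (L - 1)}}"

definition shallow_relu_max :: "('p \<Rightarrow> 'x \<Rightarrow> real) \<Rightarrow> (nat \<Rightarrow> 'p) \<Rightarrow> nat \<Rightarrow> nat \<Rightarrow> nat
    \<Rightarrow> (nat \<Rightarrow> nat \<Rightarrow> nat \<Rightarrow> real) \<Rightarrow> (nat \<Rightarrow> real) \<Rightarrow> (nat \<Rightarrow> 'x) \<Rightarrow> real" where
  "shallow_relu_max f \<phi> M N Z a b X =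
     (\<Sum>z=1..Z. b z * Max ((\<lambda>i. max 0 (\<Sum>d=1..M. a z i d * f (\<phi> d) (X i))) ` {1..N}))"

end

theory Submission
  imports Defs "Jordan_Normal_Form.Determinant"
begin

(* With linear activation and product pooling the deep score is a polynomial in the weights.
   Linear independence of the f (\<theta> d) yields R = min (r 0) M template points with dual
   coefficient vectors.  Index the sequences of length K = N/2 over {1..R} by \<rho> < R^K and feed
   the interleaving of the sequences \<rho> and \<sigma> into the network: this gives an R^K \<times> R^K
   matrix whose determinant is a polynomial in the weights.  At suitable weights the matrix is
   the identity, so the determinant vanishes only on a Lebesgue null set.
   For a shallow ReLU network with max pooling, channel z sees the row index \<rho> only through the
   maximum over the odd positions, which takes at most K * R values; hence the shallow matrix has
   rank at most Z * K * R < R^K and its determinant is zero. *)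


section \<open>Polynomials in finitely many real variables\<close>

inductive_set poly_fun :: "'i set \<Rightarrow> (('i \<Rightarrow> real) \<Rightarrow> real) set" for I where
  const: "(\<lambda>w. c) \<in> poly_fun I"
| coord: "i \<in> I \<Longrightarrow> (\<lambda>w. w i) \<in> poly_fun I"
| add: "p \<in> poly_fun I \<Longrightarrow> q \<in> poly_fun I \<Longrightarrow> (\<lambda>w. p w + q w) \<in> poly_fun I"
| mult: "p \<in> poly_fun I \<Longrightarrow> q \<in> poly_fun I \<Longrightarrow> (\<lambda>w. p w * q w) \<in> poly_fun I"

lemma poly_fun_sum: "(\<And>x. x \<in> S \<Longrightarrow> F x \<in> poly_fun I) \<Longrightarrow> (\<lambda>w. \<Sum>x\<in>S. F x w) \<in> poly_fun I"
  by (induction S rule: infinite_finite_induct) (auto intro: poly_fun.intros)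

lemma poly_fun_prod: "(\<And>x. x \<in> S \<Longrightarrow> F x \<in> poly_fun I) \<Longrightarrow> (\<lambda>w. \<Prod>x\<in>S. F x w) \<in> poly_fun I"
  by (induction S rule: infinite_finite_induct) (auto intro: poly_fun.intros)

lemma poly_fun_restrict: "(\<lambda>w. restrict w I k) \<in> poly_fun I"
  by (cases "k \<in> I") (auto intro: poly_fun.intros)

lemma poly_fun_measurable: "p \<in> poly_fun I \<Longrightarrow> p \<in> borel_measurable (PiM I (\<lambda>_. lborel))"
  by (induction rule: poly_fun.induct) (auto simp: measurable_component_singleton)

lemma poly_fun_univariate:
  assumes "p \<in> poly_fun (insert i J)"
  shows "\<exists>C. (\<forall>k. (\<lambda>w. coeff (C w) k) \<in> poly_fun J) \<and> (\<forall>w t. p (w(i := t)) = poly (C w) t)"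
  using assms
proof (induction rule: poly_fun.induct)
  case (const c)
  show ?case by (rule exI[of _ "\<lambda>w. [:c:]"]) (auto intro: poly_fun.const)
next
  case (coord j)
  show ?case
  proof (cases "j = i")
    case True
    then show ?thesis by (intro exI[of _ "\<lambda>w. [:0, 1:]"]) (auto intro: poly_fun.const)
  next
    case False
    have "(\<lambda>w. coeff [:w j:] k) \<in> poly_fun J" for k
      using coord False by (cases k) (auto intro: poly_fun.intros)
    with False show ?thesis by (intro exI[of _ "\<lambda>w. [:w j:]"]) auto
  qed
next
  case (add p q)
  then obtain C D where "\<forall>k. (\<lambda>w. coeff (C w) k) \<in> poly_fun J" "\<forall>w t. p (w(i := t)) = poly (C w) t"
    and "\<forall>k. (\<lambda>w. coeff (D w) k) \<in> poly_fun J" "\<forall>w t. q (w(i := t)) = poly (D w) t"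
    by blast
  then show ?case
    by (intro exI[of _ "\<lambda>w. C w + D w"] conjI allI) (simp_all only: coeff_add poly_add poly_fun.add)
next
  case (mult p q)
  then obtain C D where "\<forall>k. (\<lambda>w. coeff (C w) k) \<in> poly_fun J" "\<forall>w t. p (w(i := t)) = poly (C w) t"
    and "\<forall>k. (\<lambda>w. coeff (D w) k) \<in> poly_fun J" "\<forall>w t. q (w(i := t)) = poly (D w) t"
    by blast
  then show ?case
    by (intro exI[of _ "\<lambda>w. C w * D w"] conjI allI)
      (simp_all only: coeff_mult poly_mult poly_fun_sum poly_fun.mult)
qed

interpretation lborel_product: product_sigma_finite "\<lambda>_::'i. lborel"
  by standard

lemma null_sets_PiM_insert:
  fixes A :: "('i \<Rightarrow> real) set"
  assumes "finite I" "i \<notin> I" "A \<in> sets (PiM (insert i I) (\<lambda>_. lborel))"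
    and slices: "AE x in PiM I (\<lambda>_. lborel). {t. x(i := t) \<in> A} \<in> null_sets lborel"
  shows "A \<in> null_sets (PiM (insert i I) (\<lambda>_. lborel))"
proof -
  have "emeasure (PiM (insert i I) (\<lambda>_. lborel)) A
      = (\<integral>\<^sup>+ x. \<integral>\<^sup>+ t. indicator A (x(i := t)) \<partial>lborel \<partial>PiM I (\<lambda>_. lborel))"
    using assms(1-3) by (simp add: lborel_product.product_nn_integral_insert flip: nn_integral_indicator)
  also have "\<dots> = 0"
  proof -
    have "AE x in PiM I (\<lambda>_. lborel). (\<integral>\<^sup>+ t. indicator A (x(i := t)) \<partial>lborel) = 0"
      using slices
    proof eventually_elim
      case (elim x)
      have "(\<integral>\<^sup>+ t. indicator A (x(i := t)) \<partial>lborel) = (\<integral>\<^sup>+ t. indicator {t. x(i := t) \<in> A} t \<partial>lborel)"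
        by (intro nn_integral_cong) (simp add: indicator_def)
      also have "\<dots> = 0"
        using elim by (simp add: null_sets_def)
      finally show ?case .
    qed
    then show ?thesis
      by (simp add: nn_integral_cong_AE)
  qed
  finally show ?thesis
    using assms(3) by (simp add: null_sets_def)
qed

lemma poly_fun_zeros_null:
  assumes "finite I"
  shows "p \<in> poly_fun I \<Longrightarrow> w0 \<in> space (PiM I (\<lambda>_. lborel)) \<Longrightarrow> p w0 \<noteq> 0 \<Longrightarrow>
    {w \<in> space (PiM I (\<lambda>_. lborel)). p w = 0} \<in> null_sets (PiM I (\<lambda>_. lborel))"
  using assms
proof (induction I arbitrary: p w0 rule: finite_induct)
  case empty
  then have "{w \<in> space (PiM {} (\<lambda>_. lborel)). p w = 0} = {}"
    by (auto simp: space_PiM)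
  then show ?case by (metis emeasure_empty null_setsI sets.empty_sets)
next
  case (insert i I)
  obtain C where C: "\<And>k. (\<lambda>w. coeff (C w) k) \<in> poly_fun I" "\<And>w t. p (w(i := t)) = poly (C w) t"
    using poly_fun_univariate[OF insert.prems(1)] by blast
  have "w0(i := undefined) \<in> space (PiM I (\<lambda>_. lborel))"
    using insert.prems(2) insert.hyps(2) by (auto simp: space_PiM PiE_iff extensional_def)
  moreover have "poly (C (w0(i := undefined))) (w0 i) \<noteq> 0"
    using insert.prems(3) C(2)[of "w0(i := undefined)" "w0 i"] by simp
  then obtain k where "coeff (C (w0(i := undefined))) k \<noteq> 0"
    by (metis leading_coeff_0_iff poly_0)
  ultimately have N: "{x \<in> space (PiM I (\<lambda>_. lborel)). coeff (C x) k = 0} \<in> null_sets (PiM I (\<lambda>_. lborel))"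
    using insert.IH[OF C(1)] by blast
  let ?A = "{w \<in> space (PiM (insert i I) (\<lambda>_. lborel)). p w = 0}"
  show ?case
  proof (rule null_sets_PiM_insert)
    show "?A \<in> sets (PiM (insert i I) (\<lambda>_. lborel))"
      using measurable_sets[OF poly_fun_measurable[OF insert.prems(1)], of "{0}"]
      by (simp add: vimage_def Int_def conj_commute)
    show "AE x in PiM I (\<lambda>_. lborel). {t. x(i := t) \<in> ?A} \<in> null_sets lborel"
    proof (rule AE_I'[OF N], safe)
      fix x assume x: "x \<in> space (PiM I (\<lambda>_. lborel))" "{t. x(i := t) \<in> ?A} \<notin> null_sets lborel"
      show "coeff (C x) k = 0"
      proof (rule ccontr)
        assume "coeff (C x) k \<noteq> 0"
        then have "finite {t. poly (C x) t = 0}"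
          by (intro poly_roots_finite) auto
        moreover have "{t. x(i := t) \<in> ?A} = {t. poly (C x) t = 0}"
          using x(1) C(2) by (auto simp: space_PiM PiE_iff extensional_def)
        ultimately show False
          using x(2) countable_finite countable_imp_null_set_lborel by metis
      qed
    qed
  qed (use insert.hyps in auto)
qed

section \<open>Linear dependence and determinants\<close>

lemma dependent_if_span_card_less:
  fixes y :: "'p \<Rightarrow> 'x \<Rightarrow> real" and e :: "'q \<Rightarrow> 'x \<Rightarrow> real"
  assumes "finite Q" "finite P" "card Q < card P"
    and "\<And>p s. p \<in> P \<Longrightarrow> s \<in> S \<Longrightarrow> y p s = (\<Sum>q\<in>Q. lam p q * e q s)"
  shows "\<exists>c. (\<exists>p\<in>P. c p \<noteq> 0) \<and> (\<forall>s\<in>S. (\<Sum>p\<in>P. c p * y p s) = 0)"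
  using assms
proof (induction Q arbitrary: P y lam rule: finite_induct)
  case empty
  then obtain p0 where "p0 \<in> P"
    by fastforce
  with empty.prems show ?case
    by (intro exI[of _ "\<lambda>p. if p = p0 then 1 else 0"]) (auto intro!: sum.neutral)
next
  case (insert q Q)
  show ?case
  proof (cases "\<exists>p0\<in>P. lam p0 q \<noteq> 0")
    case False
    then show ?thesis
      using insert by (intro insert.IH[of P y lam]) auto
  next
    case True
    then obtain p0 where p0: "p0 \<in> P" "lam p0 q \<noteq> 0"
      by blast
    \<comment> \<open>Eliminate the coordinate q by subtracting multiples of row p0.\<close>
    define \<mu> where "\<mu> p = lam p q / lam p0 q" for p
    have "\<exists>c. (\<exists>p\<in>P - {p0}. c p \<noteq> 0) \<and>
        (\<forall>s\<in>S. (\<Sum>p\<in>P - {p0}. c p * (y p s - \<mu> p * y p0 s)) = 0)"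
    proof (rule insert.IH)
      show "card Q < card (P - {p0})"
        using insert p0 by (simp add: card_Diff_singleton)
      fix p s assume "p \<in> P - {p0}" "s \<in> S"
      then show "y p s - \<mu> p * y p0 s = (\<Sum>q'\<in>Q. (lam p q' - \<mu> p * lam p0 q') * e q' s)"
        using insert p0 by (simp add: \<mu>_def algebra_simps sum_subtractf sum_distrib_left)
    qed (use insert in auto)
    then obtain c where c: "\<exists>p\<in>P - {p0}. c p \<noteq> 0"
      "\<forall>s\<in>S. (\<Sum>p\<in>P - {p0}. c p * (y p s - \<mu> p * y p0 s)) = 0"
      by blast
    define c' where "c' p = (if p = p0 then - (\<Sum>p'\<in>P - {p0}. c p' * \<mu> p') else c p)" for p
    show ?thesis
    proof (intro exI conjI ballI)
      show "\<exists>p\<in>P. c' p \<noteq> 0"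
        using c(1) by (auto simp: c'_def)
      fix s assume "s \<in> S"
      have "(\<Sum>p\<in>P. c' p * y p s) = c' p0 * y p0 s + (\<Sum>p\<in>P - {p0}. c' p * y p s)"
        using insert.prems(1) p0(1) by (rule sum.remove)
      also have "\<dots> = c' p0 * y p0 s + (\<Sum>p\<in>P - {p0}. c p * y p s)"
        by (intro arg_cong2[where f = "(+)"] sum.cong) (auto simp: c'_def)
      also have "\<dots> = (\<Sum>p\<in>P - {p0}. c p * (y p s - \<mu> p * y p0 s))"
        by (simp add: c'_def algebra_simps sum_subtractf sum_distrib_left sum_distrib_right)
      finally show "(\<Sum>p\<in>P. c' p * y p s) = 0"
        using c(2) \<open>s \<in> S\<close> by simp
    qed
  qed
qed

lemma det_eq_0_if_rows_dependent:
  assumes "p0 < n" "c p0 \<noteq> 0" "\<And>s. s < n \<Longrightarrow> (\<Sum>p<n. c p * A p s) = 0"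
  shows "det (mat n n (\<lambda>(i, j). A i j)) = (0::real)"
proof -
  let ?A = "mat n n (\<lambda>(i, j). A i j)"
  have "vec n c \<noteq> 0\<^sub>v n"
    using assms(1,2) by (metis index_vec index_zero_vec(1))
  moreover have "transpose_mat ?A *\<^sub>v vec n c = 0\<^sub>v n"
    using assms(3) by (intro eq_vecI) (auto simp: scalar_prod_def mult.commute lessThan_atLeast0)
  ultimately have "det (transpose_mat ?A) = 0"
    by (metis det_0_iff_vec_prod_zero transpose_carrier_mat mat_carrier vec_carrier)
  then show ?thesis
    by (simp add: det_transpose[OF mat_carrier])
qed

lemma det_eq_0_if_low_rank:
  assumes "finite Q" "card Q < n" "\<And>i j. i < n \<Longrightarrow> j < n \<Longrightarrow> A i j = (\<Sum>q\<in>Q. lam i q * e q j)"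
  shows "det (mat n n (\<lambda>(i, j). A i j)) = (0::real)"
proof -
  obtain c where "\<exists>p\<in>{..<n}. c p \<noteq> 0" "\<forall>s\<in>{..<n}. (\<Sum>p<n. c p * A p s) = 0"
    using dependent_if_span_card_less[of Q "{..<n}" "{..<n}" A lam e] assms by auto
  then show ?thesis
    using det_eq_0_if_rows_dependent by blast
qed

lemma det_poly_fun:
  assumes "\<And>i j. E i j \<in> poly_fun I"
  shows "(\<lambda>w. det (mat n n (\<lambda>(i, j). E i j w))) \<in> poly_fun I"
proof -
  have "det (mat n n (\<lambda>(i, j). E i j w)) =
      (\<Sum>p\<in>{p. p permutes {0..<n}}. of_int (sign p) * (\<Prod>i\<in>{0..<n}. E i (p i) w))" for w
    unfolding det_def'[OF mat_carrier]
    by (intro sum.cong refl arg_cong2[where f = "(*)"] prod.cong) (auto dest: permutes_in_image)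
  then show ?thesis
    by (simp only:) (intro poly_fun_sum poly_fun_prod poly_fun.mult poly_fun.const assms)
qed

section \<open>Biorthogonal systems of independent functions\<close>

definition lin_span_funs :: "nat \<Rightarrow> (nat \<Rightarrow> 'x \<Rightarrow> real) \<Rightarrow> ('x \<Rightarrow> real) set" where
  "lin_span_funs M g = {\<lambda>x. \<Sum>d=1..M. c d * g d x | c. True}"

lemma lin_span_funs_generator:
  assumes "d \<in> {1..M}"
  shows "g d \<in> lin_span_funs M g"
proof -
  have "g d = (\<lambda>x. \<Sum>d'=1..M. (if d' = d then 1 else 0) * g d' x)"
    using assms by (simp add: fun_eq_iff if_distrib[of "\<lambda>u. u * _"] cong: if_cong)
  then show ?thesis
    unfolding lin_span_funs_def by (intro CollectI exI[where x = "\<lambda>d'. if d' = d then 1 else 0"]) simp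
qed

lemma lin_span_funs_lincomb:
  assumes "\<phi> \<in> lin_span_funs M g" "\<psi> \<in> lin_span_funs M g"
  shows "(\<lambda>x. s * \<phi> x + t * \<psi> x) \<in> lin_span_funs M g"
proof -
  obtain c c' where "\<phi> = (\<lambda>x. \<Sum>d=1..M. c d * g d x)" "\<psi> = (\<lambda>x. \<Sum>d=1..M. c' d * g d x)"
    using assms by (auto simp: lin_span_funs_def)
  then have "(\<lambda>x. s * \<phi> x + t * \<psi> x) = (\<lambda>x. \<Sum>d=1..M. (s * c d + t * c' d) * g d x)"
    by (simp add: sum_distrib_left sum.distrib algebra_simps)
  then show ?thesis
    by (auto simp: lin_span_funs_def)
qed

lemma lin_span_funs_sum:
  "(\<And>\<gamma>. \<gamma> \<in> G \<Longrightarrow> h \<gamma> \<in> lin_span_funs M g) \<Longrightarrow> (\<lambda>x. \<Sum>\<gamma>\<in>G. t \<gamma> * h \<gamma> x) \<in> lin_span_funs M g"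
proof (induction G rule: infinite_finite_induct)
  case (insert \<gamma> G)
  then show ?case
    using lin_span_funs_lincomb[of "h \<gamma>" M g "\<lambda>x. \<Sum>\<gamma>\<in>G. t \<gamma> * h \<gamma> x" "t \<gamma>" 1] by simp
qed (auto simp: lin_span_funs_def intro!: exI[of _ "\<lambda>_. 0"])

lemma biorthogonal_extend:
  fixes xs :: "nat \<Rightarrow> 'x" and h :: "nat \<Rightarrow> 'x \<Rightarrow> real"
  assumes bio: "\<forall>i\<in>{1..R}. \<forall>\<gamma>\<in>{1..R}. h \<gamma> (xs i) = (if i = \<gamma> then 1 else 0)"
    and span: "\<forall>\<gamma>\<in>{1..R}. h \<gamma> \<in> lin_span_funs M g" and \<phi>: "\<phi> \<in> lin_span_funs M g"
    and \<phi>_x0: "\<phi> x0 \<noteq> 0" and \<phi>_xs: "\<forall>i\<in>{1..R}. \<phi> (xs i) = 0"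
  shows "\<exists>xs' h'. (\<forall>\<gamma>\<in>{1..Suc R}. h' \<gamma> \<in> lin_span_funs M g) \<and>
    (\<forall>i\<in>{1..Suc R}. \<forall>\<gamma>\<in>{1..Suc R}. h' \<gamma> (xs' i) = (if i = \<gamma> then 1 else 0))"
proof -
  define h' where "h' \<gamma> x = (if \<gamma> = Suc R then \<phi> x / \<phi> x0 else h \<gamma> x - h \<gamma> x0 * \<phi> x / \<phi> x0)" for \<gamma> x
  have "h' \<gamma> \<in> lin_span_funs M g" if \<gamma>: "\<gamma> \<in> {1..Suc R}" for \<gamma>
  proof (cases "\<gamma> = Suc R")
    case True
    have "(\<lambda>x. (1 / \<phi> x0) * \<phi> x + 0 * \<phi> x) \<in> lin_span_funs M g"
      by (intro lin_span_funs_lincomb \<phi>)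
    with True show ?thesis
      by (simp add: h'_def[abs_def])
  next
    case False
    then have "(\<lambda>x. 1 * h \<gamma> x + (- h \<gamma> x0 / \<phi> x0) * \<phi> x) \<in> lin_span_funs M g"
      using \<gamma> \<phi> span by (intro lin_span_funs_lincomb) auto
    with False show ?thesis
      by (simp add: h'_def[abs_def])
  qed
  moreover have "h' \<gamma> ((xs(Suc R := x0)) i) = (if i = \<gamma> then 1 else 0)"
    if "i \<in> {1..Suc R}" "\<gamma> \<in> {1..Suc R}" for i \<gamma>
    using that \<phi>_x0 by (cases "i = Suc R"; cases "\<gamma> = Suc R") (auto simp: h'_def bio \<phi>_xs)
  ultimately show ?thesis
    by blast
qed

lemma lin_indep_funs_not_in_span:
  assumes indep: "lin_indep_funs M g" and "finite Q" "card Q < M"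
  shows "\<exists>d\<in>{1..M}. \<exists>x. g d x \<noteq> (\<Sum>q\<in>Q. lam d q * e q x)"
proof (rule ccontr)
  assume "\<not> ?thesis"
  then have "\<exists>c. (\<exists>d\<in>{1..M}. c d \<noteq> 0) \<and> (\<forall>x\<in>UNIV. (\<Sum>d\<in>{1..M}. c d * g d x) = 0)"
    using assms(2,3) by (intro dependent_if_span_card_less[of Q "{1..M}" UNIV g lam e]) auto
  then show False
    using indep unfolding lin_indep_funs_def by blast
qed

lemma lin_indep_funs_biorthogonal:
  assumes indep: "lin_indep_funs M g"
  shows "R \<le> M \<Longrightarrow> \<exists>xs h. (\<forall>\<gamma>\<in>{1..R}. h \<gamma> \<in> lin_span_funs M g) \<and>
    (\<forall>i\<in>{1..R}. \<forall>\<gamma>\<in>{1..R}. h \<gamma> (xs i) = (if i = \<gamma> then 1 else 0))"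
proof (induction R)
  case (Suc R)
  then obtain xs h where span: "\<forall>\<gamma>\<in>{1..R}. h \<gamma> \<in> lin_span_funs M g"
    and bio: "\<forall>i\<in>{1..R}. \<forall>\<gamma>\<in>{1..R}. h \<gamma> (xs i) = (if i = \<gamma> then 1 else 0)"
    by auto
  define res where "res d x = g d x - (\<Sum>\<gamma>=1..R. g d (xs \<gamma>) * h \<gamma> x)" for d x
  obtain d0 x0 where d0: "d0 \<in> {1..M}" and x0: "res d0 x0 \<noteq> 0"
    using lin_indep_funs_not_in_span[OF indep, of "{1..R}" "\<lambda>d \<gamma>. g d (xs \<gamma>)" h] Suc.prems
    by (auto simp: res_def)
  have "res d0 (xs i) = 0" if "i \<in> {1..R}" for i
  proof -
    have "(\<Sum>\<gamma>=1..R. g d0 (xs \<gamma>) * h \<gamma> (xs i)) = (\<Sum>\<gamma>=1..R. if \<gamma> = i then g d0 (xs \<gamma>) else 0)"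
      using that bio by (intro sum.cong) auto
    then show ?thesis
      using that by (simp add: res_def)
  qed
  moreover have "(\<lambda>x. 1 * g d0 x + (-1) * (\<Sum>\<gamma>=1..R. g d0 (xs \<gamma>) * h \<gamma> x)) \<in> lin_span_funs M g"
    using span by (intro lin_span_funs_lincomb lin_span_funs_generator lin_span_funs_sum d0) auto
  then have "res d0 \<in> lin_span_funs M g"
    by (simp add: res_def[abs_def])
  ultimately show ?case
    using bio span x0 by (intro biorthogonal_extend) auto
qed auto

lemma lin_indep_funs_dual_points:
  assumes "lin_indep_funs M g" "R \<le> M"
  shows "\<exists>xs a. \<forall>i\<in>{1..R}. \<forall>\<gamma>\<in>{1..R}. (\<Sum>d=1..M. a \<gamma> d * g d (xs i)) = (if i = \<gamma> then 1 else 0)"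
proof -
  obtain xs h where span: "\<forall>\<gamma>\<in>{1..R}. h \<gamma> \<in> lin_span_funs M g"
    and bio: "\<forall>i\<in>{1..R}. \<forall>\<gamma>\<in>{1..R}. h \<gamma> (xs i) = (if i = \<gamma> then 1 else 0)"
    using lin_indep_funs_biorthogonal[OF assms] by blast
  obtain a where "\<forall>\<gamma>\<in>{1..R}. h \<gamma> = (\<lambda>x. \<Sum>d=1..M. a \<gamma> d * g d x)"
    using span unfolding lin_span_funs_def by (auto dest!: bchoice)
  with bio show ?thesis
    by (intro exI[of _ xs] exI[of _ a]) simp
qed

section \<open>The deep network\<close>

lemma deep_u_cong_weights:
  assumes agree: "\<And>k. k \<in> deep_weight_idx M r L Y \<Longrightarrow> w k = w' k"
  shows "l < L \<Longrightarrow> j \<in> {1..2^(L - l)} \<Longrightarrow> \<gamma> \<in> {1..r l} \<Longrightarrow>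
    deep_u \<sigma> P f \<theta> M r w X l j \<gamma> = deep_u \<sigma> P f \<theta> M r w' X l j \<gamma>"
proof (induction l arbitrary: j \<gamma>)
  case 0
  then have "\<forall>d\<in>{1..M}. w (0, j, \<gamma>, d) = w' (0, j, \<gamma>, d)"
    by (intro ballI agree) (simp add: deep_weight_idx_def)
  then show ?case
    by simp
next
  case (Suc l)
  have "(2::nat) ^ L div 2 ^ Suc l = 2 ^ (L - Suc l)"
    using Suc.prems(1) by (intro power_diff[symmetric]) auto
  then have "\<forall>\<alpha>\<in>{1..r l}. w (Suc l, j, \<gamma>, \<alpha>) = w' (Suc l, j, \<gamma>, \<alpha>)"
    using Suc.prems by (intro ballI agree) (simp add: deep_weight_idx_def)
  moreover have "L - l = Suc (L - Suc l)"
    using Suc.prems(1) by simp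
  then have "2*j - 1 \<in> {1..2^(L - l)}" "2*j \<in> {1..2^(L - l)}"
    using Suc.prems(2) by auto
  ultimately show ?case
    using Suc.IH[of "2*j - 1"] Suc.IH[of "2*j"] Suc.prems(1) by simp
qed

lemma deep_score_restrict:
  assumes "L \<ge> 1" "y \<in> {1..Y}"
  shows "deep_score \<sigma> P f \<theta> M r L (restrict w (deep_weight_idx M r L Y)) y X = deep_score \<sigma> P f \<theta> M r L w y X"
proof -
  have "deep_u \<sigma> P f \<theta> M r (restrict w (deep_weight_idx M r L Y)) X (L - 1) j \<alpha> = deep_u \<sigma> P f \<theta> M r w X (L - 1) j \<alpha>"
    if "j \<in> {1..2}" "\<alpha> \<in> {1..r (L - 1)}" for j \<alpha>
    using deep_u_cong_weights[of M r L Y "restrict w (deep_weight_idx M r L Y)" w "L - 1" j \<alpha>] assms that by simp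
  moreover have "(L, 1, y, \<alpha>) \<in> deep_weight_idx M r L Y" if "\<alpha> \<in> {1..r (L - 1)}" for \<alpha>
    using assms that by (simp add: deep_weight_idx_def)
  ultimately show ?thesis
    unfolding deep_score_def deep_v_def by (intro sum.cong) auto
qed

lemma finite_deep_weight_idx: "finite (deep_weight_idx M r L Y)"
proof -
  let ?C = "\<Union>l\<le>L. {1..r l}"
  have "deep_weight_idx M r L Y \<subseteq> {..L} \<times> {..2^L} \<times> (?C \<union> {1..Y}) \<times> (?C \<union> {1..M})"
    unfolding deep_weight_idx_def by (fastforce intro: order.trans[OF _ div_le_dividend])
  then show ?thesis
    by (rule finite_subset) simp
qed

lemma deep_u_poly_fun: "(\<lambda>w. deep_u (\<lambda>z. z) (*) f \<theta> M r (restrict w I) X l j \<gamma>) \<in> poly_fun I"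
proof (induction l arbitrary: j \<gamma>)
  case 0
  show ?case
    unfolding deep_u.simps by (intro poly_fun_sum poly_fun.mult poly_fun.const poly_fun_restrict)
next
  case (Suc l)
  show ?case
    unfolding deep_u.simps by (intro poly_fun_sum poly_fun.mult poly_fun_restrict Suc.IH)
qed

lemma deep_score_poly_fun: "(\<lambda>w. deep_score (\<lambda>z. z) (*) f \<theta> M r L (restrict w I) y X) \<in> poly_fun I"
  unfolding deep_score_def deep_v_def
  by (intro poly_fun_sum poly_fun.mult poly_fun_restrict deep_u_poly_fun)

lemma deep_score_eq_deep_u:
  "1 \<le> L \<Longrightarrow> deep_score (\<lambda>z. z) P f \<theta> M r L w y X = deep_u (\<lambda>z. z) P f \<theta> M r w X L 1 y"
  by (cases L) (simp_all add: deep_score_def deep_v_def)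

lemma deep_u_template_level1:
  assumes bio: "\<forall>i\<in>{1..R}. \<forall>\<gamma>\<in>{1..R}. (\<Sum>d=1..M. a \<gamma> d * f (\<theta> d) (xs i)) = (if i = \<gamma> then 1 else 0)"
    and T: "\<And>i. T i \<in> {1..R}" and R: "R \<le> r 0"
    and w0: "\<And>j \<gamma> d. w (0, j, \<gamma>, d) = (if \<gamma> \<le> R then a \<gamma> d else 0)"
    and w1: "\<And>j \<gamma> \<alpha>. w (1, j, \<gamma>, \<alpha>) = (if \<alpha> \<le> R then 1 else 0)"
  shows "deep_u (\<lambda>z. z) (*) f \<theta> M r w (xs \<circ> T) 1 j \<gamma> = (if T (2*j - 1) = T (2*j) then 1 else 0)"
proof -
  have level0: "deep_u (\<lambda>z. z) (*) f \<theta> M r w (xs \<circ> T) 0 i \<alpha> = (if T i = \<alpha> then 1 else 0)"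
    if "1 \<le> \<alpha>" for i \<alpha>
  proof (cases "\<alpha> \<le> R")
    case True
    then show ?thesis
      using bio T[of i] that by (simp add: w0)
  next
    case False
    then show ?thesis
      using T[of i] by (simp add: w0)
  qed
  have "deep_u (\<lambda>z. z) (*) f \<theta> M r w (xs \<circ> T) 1 j \<gamma> = (\<Sum>\<alpha>=1..r 0. w (1, j, \<gamma>, \<alpha>) *
      (deep_u (\<lambda>z. z) (*) f \<theta> M r w (xs \<circ> T) 0 (2*j - 1) \<alpha> * deep_u (\<lambda>z. z) (*) f \<theta> M r w (xs \<circ> T) 0 (2*j) \<alpha>))"
    by (simp only: One_nat_def deep_u.simps(2))
  also have "\<dots> = (\<Sum>\<alpha>=1..r 0. if \<alpha> = T (2*j - 1) then (if T (2*j - 1) = T (2*j) then 1 else 0) else 0)"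
    using T[of "2*j - 1"] R by (intro sum.cong) (auto simp: w1[unfolded One_nat_def] level0 simp del: deep_u.simps)
  also have "\<dots> = (if T (2*j - 1) = T (2*j) then 1 else 0)"
    using T[of "2*j - 1"] R by simp
  finally show ?thesis .
qed

lemma deep_u_product_tree:
  assumes level1: "\<And>j \<gamma>. deep_u (\<lambda>z. z) (*) f \<theta> M r w X 1 j \<gamma> = F j"
    and select: "\<And>l j \<gamma> \<alpha>. 2 \<le> l \<Longrightarrow> w (l, j, \<gamma>, \<alpha>) = (if \<alpha> = 1 then 1 else 0)"
    and r: "\<And>l. l < L \<Longrightarrow> 1 \<le> r l"
  shows "1 \<le> l \<Longrightarrow> l \<le> L \<Longrightarrow> 1 \<le> j \<Longrightarrow>
    deep_u (\<lambda>z. z) (*) f \<theta> M r w X l j \<gamma> = (\<Prod>k\<in>{(j - 1) * 2^(l - 1)..<j * 2^(l - 1)}. F (Suc k))"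
proof (induction l arbitrary: j \<gamma>)
  case (Suc l)
  show ?case
  proof (cases "l = 0")
    case True
    moreover have "{j - 1..<j} = {j - 1}"
      using Suc.prems(3) by auto
    ultimately show ?thesis
      using Suc.prems level1[unfolded One_nat_def, of j \<gamma>] by (simp del: deep_u.simps)
  next
    case False
    let ?u = "\<lambda>j. deep_u (\<lambda>z. z) (*) f \<theta> M r w X l j 1"
    let ?block = "\<lambda>a b. \<Prod>k\<in>{a * 2^(l - 1)..<b * 2^(l - 1)}. F (Suc k)"
    have "deep_u (\<lambda>z. z) (*) f \<theta> M r w X (Suc l) j \<gamma> = (\<Sum>\<alpha>=1..r l. w (Suc l, j, \<gamma>, \<alpha>) *
        (deep_u (\<lambda>z. z) (*) f \<theta> M r w X l (2*j - 1) \<alpha> * deep_u (\<lambda>z. z) (*) f \<theta> M r w X l (2*j) \<alpha>))"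
      by (simp only: deep_u.simps(2))
    also have "\<dots> = (\<Sum>\<alpha>=1..r l. if \<alpha> = 1 then ?u (2*j - 1) * ?u (2*j) else 0)"
      using False by (intro sum.cong) (auto simp: select simp del: deep_u.simps)
    also have "\<dots> = ?u (2*j - 1) * ?u (2*j)"
      using r[of l] Suc.prems(2) by simp
    also have "\<dots> = ?block (2*j - 1 - 1) (2*j - 1) * ?block (2*j - 1) (2*j)"
      using Suc.IH[of "2*j - 1" 1] Suc.IH[of "2*j" 1] False Suc.prems by (simp del: deep_u.simps)
    also have "\<dots> = ?block (2*j - 1 - 1) (2*j)"
      by (intro prod.atLeastLessThan_concat mult_le_mono1) auto
    finally have "deep_u (\<lambda>z. z) (*) f \<theta> M r w X (Suc l) j \<gamma> = ?block (2*j - 1 - 1) (2*j)" .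
    moreover have "(2*j - 1 - 1) * 2^(l - 1) = (j - 1) * 2^l" "2*j * 2^(l - 1) = j * 2^l"
      using False by (cases l; simp add: diff_mult_distrib)+
    ultimately show ?thesis
      by (simp only: diff_Suc_1)
  qed
qed simp
text \<open>Layer 0 sends the template point xs i to the i-th unit vector, layer 1 takes inner products
  of these one-hot vectors, and the higher layers multiply the first channels.\<close>

definition template_weights :: "nat \<Rightarrow> (nat \<Rightarrow> nat \<Rightarrow> real) \<Rightarrow> nat \<times> nat \<times> nat \<times> nat \<Rightarrow> real" where
  "template_weights R a = (\<lambda>(l, j, \<gamma>, \<alpha>). if l = 0 then (if \<gamma> \<le> R then a \<gamma> \<alpha> else 0)
      else if l = 1 then (if \<alpha> \<le> R then 1 else 0) else (if \<alpha> = 1 then 1 else 0))"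

lemma deep_score_template:
  assumes L: "1 \<le> L" and r: "\<And>l. l < L \<Longrightarrow> 1 \<le> r l" and R: "R \<le> r 0"
    and bio: "\<forall>i\<in>{1..R}. \<forall>\<gamma>\<in>{1..R}. (\<Sum>d=1..M. a \<gamma> d * f (\<theta> d) (xs i)) = (if i = \<gamma> then 1 else 0)"
    and T: "\<And>i. T i \<in> {1..R}"
  shows "deep_score (\<lambda>z. z) (*) f \<theta> M r L (template_weights R a) y (xs \<circ> T)
    = (\<Prod>k<2^(L - 1). if T (2*k + 1) = T (2*k + 2) then 1 else 0)"
proof -
  have level1: "deep_u (\<lambda>z. z) (*) f \<theta> M r (template_weights R a) (xs \<circ> T) 1 j \<gamma>
      = (if T (2*j - 1) = T (2*j) then 1 else 0)" for j \<gamma>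
    using bio T R by (rule deep_u_template_level1) (simp_all add: template_weights_def)
  have "deep_u (\<lambda>z. z) (*) f \<theta> M r (template_weights R a) (xs \<circ> T) L 1 y
      = (\<Prod>k\<in>{(1 - 1) * 2^(L - 1)..<1 * 2^(L - 1)}. if T (2 * Suc k - 1) = T (2 * Suc k) then 1 else 0)"
    by (rule deep_u_product_tree[OF level1 _ r]) (use L in \<open>auto simp: template_weights_def\<close>)
  then show ?thesis
    by (simp add: deep_score_eq_deep_u[OF L] lessThan_atLeast0 del: deep_u.simps)
qed

definition interleave :: "(nat \<Rightarrow> 'a) \<Rightarrow> (nat \<Rightarrow> 'a) \<Rightarrow> nat \<Rightarrow> 'a" where
  "interleave u v i = (if odd i then u (i div 2) else v (i div 2 - 1))"

lemma interleave_odd [simp]: "interleave u v (2*k + 1) = u k"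
  by (simp add: interleave_def)

lemma interleave_even [simp]: "interleave u v (2*k + 2) = v k"
  by (simp add: interleave_def)

lemma interleave_in: "(\<And>k. u k \<in> A) \<Longrightarrow> (\<And>k. v k \<in> A) \<Longrightarrow> interleave u v i \<in> A"
  by (simp add: interleave_def)

lemma deep_score_grid_delta:
  assumes L: "1 \<le> L" and r: "\<And>l. l < L \<Longrightarrow> 1 \<le> r l" and R: "R \<le> r 0"
    and bio: "\<forall>i\<in>{1..R}. \<forall>\<gamma>\<in>{1..R}. (\<Sum>d=1..M. a \<gamma> d * f (\<theta> d) (xs i)) = (if i = \<gamma> then 1 else 0)"
    and t: "\<And>\<rho> k. t \<rho> k \<in> {1..R}"
    and t_inj: "(\<forall>k<2^(L - 1). t \<rho> k = t \<sigma> k) \<Longrightarrow> \<rho> = \<sigma>"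
  shows "deep_score (\<lambda>z. z) (*) f \<theta> M r L (template_weights R a) y (xs \<circ> interleave (t \<rho>) (t \<sigma>))
    = (if \<rho> = \<sigma> then 1 else 0)"
proof -
  have "deep_score (\<lambda>z. z) (*) f \<theta> M r L (template_weights R a) y (xs \<circ> interleave (t \<rho>) (t \<sigma>))
      = (\<Prod>k<2^(L - 1). if interleave (t \<rho>) (t \<sigma>) (2*k + 1) = interleave (t \<rho>) (t \<sigma>) (2*k + 2) then 1 else 0)"
    using L r R bio interleave_in[of "t \<rho>" _ "t \<sigma>", OF t t] by (rule deep_score_template)
  also have "\<dots> = (\<Prod>k<2^(L - 1). if t \<rho> k = t \<sigma> k then 1 else 0)"
    by (simp only: interleave_odd interleave_even)
  also have "\<dots> = (if \<rho> = \<sigma> then 1 else 0)"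
    using t_inj by auto
  finally show ?thesis .
qed

lemma deep_grid_det_zero_null:
  fixes M L Y :: nat and r :: "nat \<Rightarrow> nat" and t :: "nat \<Rightarrow> nat \<Rightarrow> nat"
  defines "I \<equiv> deep_weight_idx M r L Y"
  assumes L: "1 \<le> L" and r: "\<And>l. l < L \<Longrightarrow> 1 \<le> r l" and y: "y \<in> {1..Y}" and R: "R \<le> r 0"
    and bio: "\<forall>i\<in>{1..R}. \<forall>\<gamma>\<in>{1..R}. (\<Sum>d=1..M. a \<gamma> d * f (\<theta> d) (xs i)) = (if i = \<gamma> then 1 else 0)"
    and t: "\<And>\<rho> k. t \<rho> k \<in> {1..R}"
    and t_inj: "\<And>\<rho> \<sigma>. \<rho> < n \<Longrightarrow> \<sigma> < n \<Longrightarrow> (\<forall>k<2^(L - 1). t \<rho> k = t \<sigma> k) \<Longrightarrow> \<rho> = \<sigma>"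
  shows "{w \<in> space (PiM I (\<lambda>_. lborel)). det (mat n n (\<lambda>(\<rho>, \<sigma>).
      deep_score (\<lambda>z. z) (*) f \<theta> M r L w y (xs \<circ> interleave (t \<rho>) (t \<sigma>)))) = 0}
    \<in> null_sets (PiM I (\<lambda>_. lborel))"
proof -
  let ?D = "\<lambda>w. det (mat n n (\<lambda>(\<rho>, \<sigma>).
      deep_score (\<lambda>z. z) (*) f \<theta> M r L (restrict w I) y (xs \<circ> interleave (t \<rho>) (t \<sigma>))))"
  have score_restrict: "deep_score (\<lambda>z. z) (*) f \<theta> M r L (restrict w I) y X = deep_score (\<lambda>z. z) (*) f \<theta> M r L w y X"
    for w X
    unfolding I_def using L y by (rule deep_score_restrict)
  let ?w0 = "template_weights R a"
  have "mat n n (\<lambda>(\<rho>, \<sigma>). deep_score (\<lambda>z. z) (*) f \<theta> M r L (restrict (restrict ?w0 I) I) y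
      (xs \<circ> interleave (t \<rho>) (t \<sigma>))) = 1\<^sub>m n"
    using L r R bio t t_inj by (intro eq_matI) (auto simp: score_restrict deep_score_grid_delta)
  then have "?D (restrict ?w0 I) \<noteq> 0"
    by simp
  moreover have "?D \<in> poly_fun I"
    by (intro det_poly_fun deep_score_poly_fun)
  moreover have "finite I"
    unfolding I_def by (rule finite_deep_weight_idx)
  moreover have "restrict ?w0 I \<in> space (PiM I (\<lambda>_. lborel))"
    by (simp add: space_PiM)
  ultimately have "{w \<in> space (PiM I (\<lambda>_. lborel)). ?D w = 0} \<in> null_sets (PiM I (\<lambda>_. lborel))"
    using poly_fun_zeros_null by blast
  then show ?thesis
    by (rule back_subst[of "\<lambda>A. A \<in> _"]) (auto simp: space_PiM)
qed

section \<open>The shallow network\<close>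

lemma shallow_relu_max_split_span:
  fixes X :: "'r \<Rightarrow> 'c \<Rightarrow> nat \<Rightarrow> 'x"
  assumes A: "finite A" "A \<noteq> {}" and B: "B \<noteq> {}" and AB: "{1..N} = A \<union> B"
    and left: "\<And>\<rho> \<sigma> i. i \<in> A \<Longrightarrow> X \<rho> \<sigma> i = u \<rho> i" and right: "\<And>\<rho> \<sigma> i. i \<in> B \<Longrightarrow> X \<rho> \<sigma> i = v \<sigma> i"
    and V: "finite V" "\<And>\<rho> i. i \<in> A \<Longrightarrow> u \<rho> i \<in> V"
  shows "\<exists>(Q :: (nat \<times> real) set) lam e. finite Q \<and> card Q \<le> Z * (card A * card V) \<and>
    (\<forall>\<rho> \<sigma>. shallow_relu_max f \<phi> M N Z a b (X \<rho> \<sigma>) = (\<Sum>q\<in>Q. lam \<rho> q * e q \<sigma>))"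
proof -
  define relu where "relu z i x = max 0 (\<Sum>d=1..M. a z i d * f (\<phi> d) x)" for z i x
  define U where "U z \<rho> = Max ((\<lambda>i. relu z i (u \<rho> i)) ` A)" for z \<rho>
  define W where "W z \<sigma> = Max ((\<lambda>i. relu z i (v \<sigma> i)) ` B)" for z \<sigma>
  have "finite B"
    using AB by (metis finite_Un finite_atLeastAtMost)
  have shallow: "shallow_relu_max f \<phi> M N Z a b (X \<rho> \<sigma>) = (\<Sum>z=1..Z. b z * max (U z \<rho>) (W z \<sigma>))" for \<rho> \<sigma>
  proof -
    have "(\<lambda>i. max 0 (\<Sum>d=1..M. a z i d * f (\<phi> d) (X \<rho> \<sigma> i))) ` {1..N}
        = (\<lambda>i. relu z i (u \<rho> i)) ` A \<union> (\<lambda>i. relu z i (v \<sigma> i)) ` B" for z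
      unfolding AB image_Un relu_def using left right by (auto intro!: image_cong)
    then show ?thesis
      unfolding shallow_relu_max_def U_def W_def using A B \<open>finite B\<close> by (simp add: Max_Un)
  qed
  \<comment> \<open>The row index enters max (U z \<rho>) (W z \<sigma>) only through the value U z \<rho>, which ranges over T z.\<close>
  define T where "T z = (\<lambda>(i, x). relu z i x) ` (A \<times> V)" for z
  have U_in_T: "U z \<rho> \<in> T z" for z \<rho>
  proof -
    have "U z \<rho> \<in> (\<lambda>i. relu z i (u \<rho> i)) ` A"
      unfolding U_def using A by (intro Max_in) auto
    then show ?thesis
      unfolding T_def using V(2) by (auto intro!: rev_image_eqI[of "(_, u \<rho> _)"])
  qed
  have finite_T: "finite (T z)" for z
    using A V by (simp add: T_def)
  show ?thesis
  proof (intro exI conjI allI)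
    show "finite (Sigma {1..Z} T)"
      using finite_T by simp
    have "card (Sigma {1..Z} T) = (\<Sum>z=1..Z. card (T z))"
      using finite_T by simp
    also have "\<dots> \<le> (\<Sum>z=1..Z. card A * card V)"
      unfolding T_def by (intro sum_mono order.trans[OF card_image_le]) (simp_all add: A V card_cartesian_product)
    finally show "card (Sigma {1..Z} T) \<le> Z * (card A * card V)"
      by simp
    fix \<rho> \<sigma>
    have "(\<Sum>(z, s)\<in>Sigma {1..Z} T. (if U z \<rho> = s then b z else 0) * max s (W z \<sigma>))
        = (\<Sum>z=1..Z. \<Sum>s\<in>T z. if s = U z \<rho> then b z * max s (W z \<sigma>) else 0)"
      using finite_T by (subst sum.Sigma) (auto intro!: sum.cong)
    also have "\<dots> = shallow_relu_max f \<phi> M N Z a b (X \<rho> \<sigma>)"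
      using finite_T U_in_T by (simp add: shallow)
    finally show "shallow_relu_max f \<phi> M N Z a b (X \<rho> \<sigma>)
        = (\<Sum>q\<in>Sigma {1..Z} T. (case q of (z, s) \<Rightarrow> if U z \<rho> = s then b z else 0) *
            (case q of (z, s) \<Rightarrow> max s (W z \<sigma>)))"
      by (simp add: case_prod_beta')
  qed
qed

lemma shallow_grid_det_zero:
  assumes K: "1 \<le> K" and t: "\<And>\<rho> k. t \<rho> k \<in> {1..R}" and Z: "Z * (K * R) < n"
  shows "det (mat n n (\<lambda>(\<rho>, \<sigma>). shallow_relu_max f \<phi> M (2*K) Z a b (xs \<circ> interleave (t \<rho>) (t \<sigma>)))) = 0"
proof -
  let ?A = "{i \<in> {1..2*K}. odd i}"
  have "?A \<subseteq> (\<lambda>k. 2*k + 1) ` {..<K}"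
  proof
    fix i assume "i \<in> ?A"
    then obtain k where "i = 2*k + 1" "2*k + 1 \<le> 2*K"
      by (auto elim: oddE)
    then show "i \<in> (\<lambda>k. 2*k + 1) ` {..<K}"
      by auto
  qed
  then have "card ?A \<le> card ((\<lambda>k. 2*k + 1) ` {..<K})"
    by (intro card_mono) simp_all
  also have "\<dots> \<le> K"
    using card_image_le[of "{..<K}" "\<lambda>k. 2*k + 1"] by simp
  finally have "card ?A \<le> K" .
  moreover have "card (xs ` {1..R}) \<le> R"
    using card_image_le[of "{1..R}" xs] by simp
  moreover have "\<exists>(Q :: (nat \<times> real) set) lam e. finite Q \<and> card Q \<le> Z * (card ?A * card (xs ` {1..R})) \<and>
      (\<forall>\<rho> \<sigma>. shallow_relu_max f \<phi> M (2*K) Z a b (xs \<circ> interleave (t \<rho>) (t \<sigma>)) = (\<Sum>q\<in>Q. lam \<rho> q * e q \<sigma>))"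
  proof (rule shallow_relu_max_split_span)
    have "1 \<in> ?A" "2 \<in> {i \<in> {1..2*K}. even i}"
      using K by simp_all
    then show "?A \<noteq> {}" "{i \<in> {1..2*K}. even i} \<noteq> {}"
      by blast+
    show "{1..2*K} = ?A \<union> {i \<in> {1..2*K}. even i}"
      by auto
    show "(xs \<circ> interleave (t \<rho>) (t \<sigma>)) i = xs (t \<rho> (i div 2))" if "i \<in> ?A" for \<rho> \<sigma> i
      using that by (simp add: interleave_def)
    show "(xs \<circ> interleave (t \<rho>) (t \<sigma>)) i = xs (t \<sigma> (i div 2 - 1))" if "i \<in> {i \<in> {1..2*K}. even i}" for \<rho> \<sigma> i
      using that by (simp add: interleave_def)
    show "xs (t \<rho> (i div 2)) \<in> xs ` {1..R}" for \<rho> i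
      using t by blast
  qed auto
  then obtain Q :: "(nat \<times> real) set" and lam e where Q: "finite Q" "card Q \<le> Z * (card ?A * card (xs ` {1..R}))"
    and span: "\<forall>\<rho> \<sigma>. shallow_relu_max f \<phi> M (2*K) Z a b (xs \<circ> interleave (t \<rho>) (t \<sigma>)) = (\<Sum>q\<in>Q. lam \<rho> q * e q \<sigma>)"
    by blast
  ultimately have "card Q < n"
    using Z by (meson le_trans mult_le_mono order.refl le_less_trans)
  then show ?thesis
    using span by (intro det_eq_0_if_low_rank[OF Q(1)]) auto
qed

section \<open>Deep versus shallow\<close>

lemma ex_injective_digit_sequences:
  assumes "1 \<le> R"
  shows "\<exists>t :: nat \<Rightarrow> nat \<Rightarrow> nat. (\<forall>\<rho> k. t \<rho> k \<in> {1..R}) \<and>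
    (\<forall>\<rho> \<sigma>. \<rho> < R^K \<longrightarrow> \<sigma> < R^K \<longrightarrow> (\<forall>k<K. t \<rho> k = t \<sigma> k) \<longrightarrow> \<rho> = \<sigma>)"
proof -
  have "card ({..<K} \<rightarrow>\<^sub>E {1..R}) = R^K"
    by (simp add: card_PiE)
  then obtain h where h: "bij_betw h {..<R^K} ({..<K} \<rightarrow>\<^sub>E {1..R})"
    using finite_same_card_bij[of "{..<R^K}" "{..<K} \<rightarrow>\<^sub>E {1..R}"] by (auto simp: finite_PiE)
  have h_in: "h \<rho> \<in> {..<K} \<rightarrow>\<^sub>E {1..R}" if "\<rho> < R^K" for \<rho>
    using h that by (auto simp: bij_betw_def)
  show ?thesis
  proof (intro exI[of _ "\<lambda>\<rho> k. if \<rho> < R^K \<and> k < K then h \<rho> k else 1"] conjI allI impI)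
    fix \<rho> k
    show "(if \<rho> < R^K \<and> k < K then h \<rho> k else 1) \<in> {1..R}"
      using h_in[of \<rho>] assms by (auto simp: PiE_iff)
  next
    fix \<rho> \<sigma> assume \<rho>\<sigma>: "\<rho> < R^K" "\<sigma> < R^K"
      and "\<forall>k<K. (if \<rho> < R^K \<and> k < K then h \<rho> k else 1) = (if \<sigma> < R^K \<and> k < K then h \<sigma> k else 1)"
    then have "h \<rho> = h \<sigma>"
      using h_in by (intro PiE_ext[of _ "{..<K}" "\<lambda>_. {1..R}"]) auto
    then show "\<rho> = \<sigma>"
      using h \<rho>\<sigma> by (auto simp: bij_betw_def inj_on_def)
  qed
qed

lemma shallow_width_bound:
  fixes Z M K R :: nat
  assumes "real Z < real R ^ K * (2 / (real M * real (2 * K)))" "0 < M" "0 < K" "R \<le> M"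
  shows "Z * (K * R) < R ^ K"
proof -
  have "real (Z * M * K) < real (R ^ K)"
    using assms(1-3) by (simp add: field_simps)
  moreover have "Z * (K * R) \<le> Z * M * K"
    using assms(4) by simp
  ultimately show ?thesis
    by linarith
qed

theorem claim11:
  fixes \<Theta> :: "'p::topological_space set"
    and f :: "'p \<Rightarrow> real^'s \<Rightarrow> real"
    and L M Y y :: nat
    and r :: "nat \<Rightarrow> nat"
    and \<theta> :: "nat \<Rightarrow> 'p"
    and Pr :: "(nat \<times> nat \<times> nat \<times> nat \<Rightarrow> real) measure"
  assumes F: "rep_family \<Theta> f"
    and L: "L \<ge> 1"
    and r: "\<forall>l<L. r l \<ge> 1"
    and y: "y \<in> {1..Y}"
    and \<theta>: "\<forall>d\<in>{1..M}. \<theta> d \<in> \<Theta>"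
    and indep: "lin_indep_funs M (\<lambda>d. f (\<theta> d))"
    and prob: "prob_space Pr"
    and sets: "sets Pr = sets (PiM (deep_weight_idx M r L Y) (\<lambda>_. lborel))"
    and ac: "absolutely_continuous (PiM (deep_weight_idx M r L Y) (\<lambda>_. lborel)) Pr"
  shows "AE w in Pr. \<forall>Z \<phi> a b.
            (\<forall>d\<in>{1..M}. \<phi> d \<in> \<Theta>) \<and>
            real Z < real (min (r 0) M) ^ (2^L div 2) * (2 / (real M * real (2^L)))
            \<longrightarrow> (\<exists>X. deep_score (\<lambda>z. z) (*) f \<theta> M r L w y X
                       \<noteq> shallow_relu_max f \<phi> M (2^L) Z a b X)"
proof (cases "M = 0")
  case False
  define R K where "R = min (r 0) M" and "K = (2::nat) ^ (L - 1)"
  have R: "1 \<le> R" "R \<le> M" "R \<le> r 0"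
    using False r L by (auto simp: R_def)
  have K: "2^L = 2*K" "2^L div 2 = K" "1 \<le> K"
    using L by (cases L; simp add: K_def)+
  obtain xs a where bio: "\<forall>i\<in>{1..R}. \<forall>\<gamma>\<in>{1..R}. (\<Sum>d=1..M. a \<gamma> d * f (\<theta> d) (xs i)) = (if i = \<gamma> then 1 else 0)"
    using lin_indep_funs_dual_points[OF indep R(2)] by blast
  obtain t where t: "\<And>\<rho> k. t \<rho> k \<in> {1..R}"
    and t_inj: "\<And>\<rho> \<sigma>. \<rho> < R^K \<Longrightarrow> \<sigma> < R^K \<Longrightarrow> \<forall>k<K. t \<rho> k = t \<sigma> k \<Longrightarrow> \<rho> = \<sigma>"
    using ex_injective_digit_sequences[OF R(1)] by blast
  let ?grid = "\<lambda>\<rho> \<sigma>. xs \<circ> interleave (t \<rho>) (t \<sigma>)"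
  let ?D = "\<lambda>w. det (mat (R^K) (R^K) (\<lambda>(\<rho>, \<sigma>). deep_score (\<lambda>z. z) (*) f \<theta> M r L w y (?grid \<rho> \<sigma>)))"
  let ?PM = "PiM (deep_weight_idx M r L Y) (\<lambda>_. lborel)"
  have "{w \<in> space ?PM. ?D w = 0} \<in> null_sets ?PM"
    by (rule deep_grid_det_zero_null) (use L r y R bio t t_inj in \<open>auto simp: K_def\<close>)
  then have "AE w in Pr. ?D w \<noteq> 0"
    using ac sets_eq_imp_space_eq[OF sets]
    by (intro AE_I'[of "{w \<in> space ?PM. ?D w = 0}"]) (auto simp: absolutely_continuous_def)
  then show ?thesis
  proof (rule eventually_mono, intro allI impI, goal_cases)
    case (1 w Z \<phi> a' b)
    show ?case
    proof (rule ccontr)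
      assume "\<not> ?case"
      then have same: "deep_score (\<lambda>z. z) (*) f \<theta> M r L w y X = shallow_relu_max f \<phi> M (2^L) Z a' b X" for X
        by simp
      have "Z * (K * R) < R^K"
        by (rule shallow_width_bound[where M = M]) (use 1 False K R in \<open>simp_all add: R_def\<close>)
      with K(3) t have "det (mat (R^K) (R^K) (\<lambda>(\<rho>, \<sigma>). shallow_relu_max f \<phi> M (2*K) Z a' b (?grid \<rho> \<sigma>))) = 0"
        by (rule shallow_grid_det_zero)
      with 1 show False
        by (simp add: same K(1))
    qed
  qed
qed simp

end
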